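(* If all slice categories $\mathcal{C}/X$ of a category $\mathcal{C}$ have partial map classifiers, then $\mathcal{C}$ is strongly amendable.
   Context: A category is amendable if for every morphism $t_L : L \to L'$ there is a factorization $t_L = \beta \circ t_L'$ with $t_L' : L \rightarrowtail L''$ mono and $\beta : L'' \to L'$ such that for every factorization $t_L = \alpha \circ m$ with $m : L \rightarrowtail G_L$ mono and $\alpha : G_L \to L'$ there exists $\alpha' : G_L \to L''$ with $\alpha' \circ m = t_L'$ and $\beta \circ \alpha' = \alpha$. It is strongly amendable if the factorization $(t_L',\beta)$ can be chosen so that moreover, for every such $(m,\alpha)$, the corresponding $\alpha'$ can be chosen so that $L \xleftarrow{1_L} L \xrightarrow{m} G_L$ is a pullback of $L \xrightarrow{t_L'} L'' \xleftarrow{\alpha'} G_L$. *)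

theory Defs
  imports Main
begin

text \<open>Categories given explicitly: objects, arrows, domain, codomain,
  composition (cmp g f means g after f) and identities.\<close>

record ('o, 'm) cat =
  Obj :: "'o set"
  Arr :: "'m set"
  Dom :: "'m \<Rightarrow> 'o"
  Cod :: "'m \<Rightarrow> 'o"
  cmp :: "'m \<Rightarrow> 'm \<Rightarrow> 'm"
  Id  :: "'o \<Rightarrow> 'm"

definition is_category :: "('o, 'm) cat \<Rightarrow> bool" where
  "is_category C \<longleftrightarrow>
     (\<forall>f\<in>Arr C. Dom C f \<in> Obj C \<and> Cod C f \<in> Obj C) \<and>
     (\<forall>a\<in>Obj C. Id C a \<in> Arr C \<and> Dom C (Id C a) = a \<and> Cod C (Id C a) = a) \<and>
     (\<forall>f\<in>Arr C. \<forall>g\<in>Arr C. Cod C f = Dom C g \<longrightarrow>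
        cmp C g f \<in> Arr C \<and> Dom C (cmp C g f) = Dom C f \<and> Cod C (cmp C g f) = Cod C g) \<and>
     (\<forall>f\<in>Arr C. cmp C f (Id C (Dom C f)) = f \<and> cmp C (Id C (Cod C f)) f = f) \<and>
     (\<forall>f\<in>Arr C. \<forall>g\<in>Arr C. \<forall>h\<in>Arr C. Cod C f = Dom C g \<longrightarrow> Cod C g = Dom C h \<longrightarrow>
        cmp C h (cmp C g f) = cmp C (cmp C h g) f)"

definition hom :: "('o, 'm) cat \<Rightarrow> 'o \<Rightarrow> 'o \<Rightarrow> 'm set" where
  "hom C a b = {f \<in> Arr C. Dom C f = a \<and> Cod C f = b}"

definition mono :: "('o, 'm) cat \<Rightarrow> 'm \<Rightarrow> bool" where
  "mono C m \<longleftrightarrow> m \<in> Arr C \<and>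
     (\<forall>g\<in>Arr C. \<forall>h\<in>Arr C. Cod C g = Dom C m \<longrightarrow> Cod C h = Dom C m \<longrightarrow>
        Dom C g = Dom C h \<longrightarrow> cmp C m g = cmp C m h \<longrightarrow> g = h)"

definition is_pullback :: "('o, 'm) cat \<Rightarrow> 'm \<Rightarrow> 'm \<Rightarrow> 'm \<Rightarrow> 'm \<Rightarrow> bool" where
  "is_pullback C p1 p2 f g \<longleftrightarrow>
     p1 \<in> Arr C \<and> p2 \<in> Arr C \<and> f \<in> Arr C \<and> g \<in> Arr C \<and>
     Dom C p1 = Dom C p2 \<and> Cod C p1 = Dom C f \<and> Cod C p2 = Dom C g \<and> Cod C f = Cod C g \<and>
     cmp C f p1 = cmp C g p2 \<and>
     (\<forall>q1\<in>Arr C. \<forall>q2\<in>Arr C. Dom C q1 = Dom C q2 \<longrightarrow> Cod C q1 = Dom C f \<longrightarrow>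
        Cod C q2 = Dom C g \<longrightarrow> cmp C f q1 = cmp C g q2 \<longrightarrow>
        (\<exists>!u. u \<in> hom C (Dom C q1) (Dom C p1) \<and> cmp C p1 u = q1 \<and> cmp C p2 u = q2))"

definition has_partial_map_classifiers :: "('o, 'm) cat \<Rightarrow> bool" where
  "has_partial_map_classifiers C \<longleftrightarrow>
     (\<forall>Y\<in>Obj C. \<exists>T \<eta>. T \<in> Obj C \<and> \<eta> \<in> hom C Y T \<and> mono C \<eta> \<and>
        (\<forall>m f. mono C m \<longrightarrow> f \<in> hom C (Dom C m) Y \<longrightarrow>
           (\<exists>!\<chi>. \<chi> \<in> hom C (Cod C m) T \<and> is_pullback C f m \<eta> \<chi>)))"

definition slice :: "('o, 'm) cat \<Rightarrow> 'o \<Rightarrow> ('m, 'm \<times> 'm \<times> 'm) cat" where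
  "slice C X = \<lparr>
     Obj = {a \<in> Arr C. Cod C a = X},
     Arr = {(a, f, b). a \<in> Arr C \<and> Cod C a = X \<and> b \<in> Arr C \<and> Cod C b = X \<and>
              f \<in> hom C (Dom C a) (Dom C b) \<and> cmp C b f = a},
     Dom = (\<lambda>(a, f, b). a),
     Cod = (\<lambda>(a, f, b). b),
     cmp = (\<lambda>(b', g, c) (a, f, b). (a, cmp C g f, c)),
     Id = (\<lambda>a. (a, Id C (Dom C a), a)) \<rparr>"

definition strongly_amendable :: "('o, 'm) cat \<Rightarrow> bool" where
  "strongly_amendable C \<longleftrightarrow>
     (\<forall>t\<in>Arr C. \<exists>t' \<beta>. mono C t' \<and> \<beta> \<in> Arr C \<and>
        Dom C t' = Dom C t \<and> Cod C t' = Dom C \<beta> \<and> Cod C \<beta> = Cod C t \<and>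
        cmp C \<beta> t' = t \<and>
        (\<forall>m \<alpha>. mono C m \<longrightarrow> Dom C m = Dom C t \<longrightarrow>
           \<alpha> \<in> hom C (Cod C m) (Cod C t) \<longrightarrow> cmp C \<alpha> m = t \<longrightarrow>
           (\<exists>\<alpha>'. \<alpha>' \<in> hom C (Cod C m) (Cod C t') \<and> cmp C \<alpha>' m = t' \<and>
                  cmp C \<beta> \<alpha>' = \<alpha> \<and>
                  is_pullback C (Id C (Dom C t)) m t' \<alpha>')))"

end

theory Submission
  imports Defs
begin

text \<open>Fix t : L \<rightarrow> X and work in the slice over X, where t is an object. Its partial
  map classifier \<eta> : t \<rightarrowtail> T has an underlying mono t' : L \<rightarrowtail> L'' with T \<circ> t' = t, so
  \<beta> := T gives the factorization. Given another factorization t = \<alpha> \<circ> m with m mono,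
  (m, \<alpha>) is a mono from t to \<alpha> in the slice, hence (id, m) is a partial map from \<alpha> to t;
  its classifying arrow \<alpha> \<rightarrow> T has an underlying \<alpha>' with T \<circ> \<alpha>' = \<alpha>, and since the
  forgetful functor from a slice preserves pullbacks, the classifying pullback square is
  the required pullback of t' along \<alpha>'.\<close>

locale category =
  fixes C :: "('o, 'm) cat"
  assumes is_category: "is_category C"
begin

lemma dom_cod_obj:
  assumes "f \<in> Arr C"
  shows "Dom C f \<in> Obj C" and "Cod C f \<in> Obj C"
  using assms is_category unfolding is_category_def by blast+

lemma id_in_hom:
  assumes "a \<in> Obj C"
  shows "Id C a \<in> hom C a a"
  using assms is_category unfolding is_category_def hom_def by blast

lemma comp_in_hom:
  assumes "f \<in> hom C a b" and "g \<in> hom C b c"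
  shows "cmp C g f \<in> hom C a c"
  using assms is_category unfolding is_category_def hom_def by auto

lemma comp_id_right:
  assumes "f \<in> hom C a b"
  shows "cmp C f (Id C a) = f"
  using assms is_category unfolding is_category_def hom_def by auto

lemma comp_assoc:
  assumes "f \<in> hom C a b" and "g \<in> hom C b c" and "h \<in> hom C c d"
  shows "cmp C h (cmp C g f) = cmp C (cmp C h g) f"
  using assms is_category unfolding is_category_def hom_def by auto

end

lemma mono_cancel:
  assumes "mono C m" and "g \<in> Arr C" and "h \<in> Arr C"
    and "Cod C g = Dom C m" and "Cod C h = Dom C m" and "Dom C g = Dom C h"
    and "cmp C m g = cmp C m h"
  shows "g = h"
  using assms unfolding mono_def by blast

lemma slice_simps:
  "Obj (slice C X) = {a \<in> Arr C. Cod C a = X}"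
  "Dom (slice C X) (a, f, b) = a"
  "Cod (slice C X) (a, f, b) = b"
  "cmp (slice C X) (b', g, c) (a, f, b) = (a, cmp C g f, c)"
  "Id (slice C X) a = (a, Id C (Dom C a), a)"
  by (simp_all add: slice_def)

lemma slice_arr_iff:
  "(a, f, b) \<in> Arr (slice C X) \<longleftrightarrow>
     a \<in> hom C (Dom C a) X \<and> b \<in> hom C (Dom C b) X \<and>
     f \<in> hom C (Dom C a) (Dom C b) \<and> cmp C b f = a"
  by (auto simp: slice_def hom_def)

lemma slice_hom_iff:
  "(a', f, b') \<in> hom (slice C X) a b \<longleftrightarrow> a' = a \<and> b' = b \<and> (a, f, b) \<in> Arr (slice C X)"
  by (auto simp: hom_def slice_simps)

context category
begin

lemma mono_slice_iff:
  assumes F: "(a, f, b) \<in> Arr (slice C X)"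
  shows "mono (slice C X) (a, f, b) \<longleftrightarrow> mono C f"
proof
  have f: "f \<in> hom C (Dom C a) (Dom C b)" and a: "a \<in> hom C (Dom C a) X"
    and b: "b \<in> hom C (Dom C b) X" and bf: "cmp C b f = a"
    using F by (simp_all add: slice_arr_iff)
  assume mono_F: "mono (slice C X) (a, f, b)"
  show "mono C f"
    unfolding mono_def
  proof (intro conjI ballI impI)
    show "f \<in> Arr C" using f by (simp add: hom_def)
    fix g h
    assume "g \<in> Arr C" "h \<in> Arr C" "Cod C g = Dom C f" "Cod C h = Dom C f"
      "Dom C g = Dom C h" and fg_fh: "cmp C f g = cmp C f h"
    then have g: "g \<in> hom C (Dom C g) (Dom C a)" and h: "h \<in> hom C (Dom C g) (Dom C a)"
      using f by (auto simp: hom_def)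
    have "cmp C a h = cmp C b (cmp C f h)"
      using comp_assoc[OF h f b] bf by simp
    also have "\<dots> = cmp C a g"
      using comp_assoc[OF g f b] bf fg_fh by simp
    finally have ah_ag: "cmp C a h = cmp C a g" .
    have G: "(cmp C a g, g, a) \<in> Arr (slice C X)" and H: "(cmp C a g, h, a) \<in> Arr (slice C X)"
      using comp_in_hom[OF g a] comp_in_hom[OF h a] g h a ah_ag
      by (auto simp: slice_arr_iff hom_def)
    have "(cmp C a g, g, a) = (cmp C a g, h, a)"
      by (rule mono_cancel[OF mono_F G H]) (simp_all add: slice_simps fg_fh)
    then show "g = h" by simp
  qed
next
  assume mono_f: "mono C f"
  show "mono (slice C X) (a, f, b)"
    unfolding mono_def
  proof (intro conjI ballI impI)
    show "(a, f, b) \<in> Arr (slice C X)" by fact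
    fix G H
    assume "G \<in> Arr (slice C X)" "H \<in> Arr (slice C X)"
      "Cod (slice C X) G = Dom (slice C X) (a, f, b)" "Cod (slice C X) H = Dom (slice C X) (a, f, b)"
      "Dom (slice C X) G = Dom (slice C X) H"
      "cmp (slice C X) (a, f, b) G = cmp (slice C X) (a, f, b) H"
    moreover obtain g1 g g3 h1 h h3 where "G = (g1, g, g3)" "H = (h1, h, h3)"
      by (cases G, cases H) auto
    ultimately show "G = H"
      using mono_cancel[OF mono_f, of g h] F by (auto simp: slice_simps slice_arr_iff hom_def)
  qed
qed

lemma pullback_of_slice_pullback:
  assumes pb: "is_pullback (slice C X) (p, p1, a) (p, p2, b) (a, f, z) (b, g, z)"
  shows "is_pullback C p1 p2 f g"
proof -
  let ?S = "slice C X"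
  have "(p, p1, a) \<in> Arr ?S" "(p, p2, b) \<in> Arr ?S" "(a, f, z) \<in> Arr ?S" "(b, g, z) \<in> Arr ?S"
    and "cmp ?S (a, f, z) (p, p1, a) = cmp ?S (b, g, z) (p, p2, b)"
    using pb unfolding is_pullback_def by blast+
  then have p1: "p1 \<in> hom C (Dom C p) (Dom C a)" and p2: "p2 \<in> hom C (Dom C p) (Dom C b)"
    and f: "f \<in> hom C (Dom C a) (Dom C z)" and g: "g \<in> hom C (Dom C b) (Dom C z)"
    and p: "p \<in> hom C (Dom C p) X" and a: "a \<in> hom C (Dom C a) X"
    and b: "b \<in> hom C (Dom C b) X" and z: "z \<in> hom C (Dom C z) X"
    and ap1: "cmp C a p1 = p" and zf: "cmp C z f = a" and zg: "cmp C z g = b"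
    and fp1_gp2: "cmp C f p1 = cmp C g p2"
    by (simp_all add: slice_arr_iff slice_simps)
  have univ: "\<exists>!U. U \<in> hom ?S (Dom ?S Q1) p \<and> cmp ?S (p, p1, a) U = Q1 \<and> cmp ?S (p, p2, b) U = Q2"
    if "Q1 \<in> Arr ?S" "Q2 \<in> Arr ?S" "Dom ?S Q1 = Dom ?S Q2" "Cod ?S Q1 = a" "Cod ?S Q2 = b"
      "cmp ?S (a, f, z) Q1 = cmp ?S (b, g, z) Q2" for Q1 Q2
    using pb that unfolding is_pullback_def by (simp add: slice_simps)
  show ?thesis
    unfolding is_pullback_def
  proof (intro conjI ballI impI)
    show "p1 \<in> Arr C" "p2 \<in> Arr C" "f \<in> Arr C" "g \<in> Arr C" "Dom C p1 = Dom C p2"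
      "Cod C p1 = Dom C f" "Cod C p2 = Dom C g" "Cod C f = Cod C g"
      using p1 p2 f g by (simp_all add: hom_def)
    show "cmp C f p1 = cmp C g p2" by fact
    fix q1 q2
    assume "q1 \<in> Arr C" "q2 \<in> Arr C" "Dom C q1 = Dom C q2" "Cod C q1 = Dom C f" "Cod C q2 = Dom C g"
      and fq1_gq2: "cmp C f q1 = cmp C g q2"
    then have q1: "q1 \<in> hom C (Dom C q1) (Dom C a)" and q2: "q2 \<in> hom C (Dom C q1) (Dom C b)"
      using f g by (auto simp: hom_def)
    define r where "r = cmp C a q1"
    have r: "r \<in> hom C (Dom C q1) X"
      unfolding r_def using q1 a by (rule comp_in_hom)
    have "cmp C b q2 = cmp C z (cmp C g q2)"
      using comp_assoc[OF q2 g z] zg by simp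
    also have "\<dots> = r"
      using comp_assoc[OF q1 f z] zf fq1_gq2 r_def by simp
    finally have bq2: "cmp C b q2 = r" .
    have "(r, q1, a) \<in> Arr ?S" "(r, q2, b) \<in> Arr ?S"
      using q1 q2 a b r bq2 r_def by (auto simp: slice_arr_iff hom_def)
    then have "\<exists>!U. U \<in> hom ?S r p \<and> cmp ?S (p, p1, a) U = (r, q1, a) \<and>
        cmp ?S (p, p2, b) U = (r, q2, b)"
      using univ[of "(r, q1, a)" "(r, q2, b)"] fq1_gq2 by (simp add: slice_simps)
    then obtain U where U: "U \<in> hom ?S r p" "cmp ?S (p, p1, a) U = (r, q1, a)"
        "cmp ?S (p, p2, b) U = (r, q2, b)"
      and U_unique: "\<And>V. V \<in> hom ?S r p \<Longrightarrow> cmp ?S (p, p1, a) V = (r, q1, a) \<Longrightarrow>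
          cmp ?S (p, p2, b) V = (r, q2, b) \<Longrightarrow> V = U"
      by (elim ex1E) blast
    obtain u where u: "U = (r, u, p)"
      using U(1) by (cases U) (simp add: slice_hom_iff)
    have u_hom: "u \<in> hom C (Dom C q1) (Dom C p)" and "cmp C p1 u = q1" "cmp C p2 u = q2"
      using U u r by (simp_all add: slice_hom_iff slice_arr_iff slice_simps hom_def)
    show "\<exists>!u. u \<in> hom C (Dom C q1) (Dom C p1) \<and> cmp C p1 u = q1 \<and> cmp C p2 u = q2"
    proof (rule ex1I[of _ u])
      show "u \<in> hom C (Dom C q1) (Dom C p1) \<and> cmp C p1 u = q1 \<and> cmp C p2 u = q2"
        using u_hom p1 \<open>cmp C p1 u = q1\<close> \<open>cmp C p2 u = q2\<close> by (simp add: hom_def)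
    next
      fix v
      assume v: "v \<in> hom C (Dom C q1) (Dom C p1) \<and> cmp C p1 v = q1 \<and> cmp C p2 v = q2"
      then have v_hom: "v \<in> hom C (Dom C q1) (Dom C p)"
        using p1 by (simp add: hom_def)
      have "cmp C p v = r"
        using comp_assoc[OF v_hom p1 a] v ap1 r_def by simp
      then have "(r, v, p) \<in> hom ?S r p"
        using r p v_hom by (simp add: slice_hom_iff slice_arr_iff slice_simps hom_def)
      then have "(r, v, p) = U"
        using v by (intro U_unique) (simp_all add: slice_simps)
      then show "v = u" using u by simp
    qed
  qed
qed

end

definition partial_map_classifier :: "('o, 'm) cat \<Rightarrow> 'o \<Rightarrow> 'o \<Rightarrow> 'm \<Rightarrow> bool" where
  "partial_map_classifier C Y T \<eta> \<longleftrightarrow> T \<in> Obj C \<and> \<eta> \<in> hom C Y T \<and> mono C \<eta> \<and>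
     (\<forall>m f. mono C m \<longrightarrow> f \<in> hom C (Dom C m) Y \<longrightarrow>
        (\<exists>!\<chi>. \<chi> \<in> hom C (Cod C m) T \<and> is_pullback C f m \<eta> \<chi>))"

lemma has_partial_map_classifiers_iff:
  "has_partial_map_classifiers C \<longleftrightarrow> (\<forall>Y\<in>Obj C. \<exists>T \<eta>. partial_map_classifier C Y T \<eta>)"
  unfolding has_partial_map_classifiers_def partial_map_classifier_def ..

lemma (in category) slice_classifier_amends:
  assumes classifier: "partial_map_classifier (slice C (Cod C t)) t T (t, t', T)"
    and m: "mono C m" "Dom C m = Dom C t"
    and \<alpha>: "\<alpha> \<in> hom C (Cod C m) (Cod C t)" "cmp C \<alpha> m = t"
  shows "\<exists>\<alpha>'. \<alpha>' \<in> hom C (Cod C m) (Dom C T) \<and> cmp C \<alpha>' m = t' \<and> cmp C T \<alpha>' = \<alpha> \<and>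
    is_pullback C (Id C (Dom C t)) m t' \<alpha>'"
proof -
  let ?S = "slice C (Cod C t)"
  have t: "t \<in> Arr C" and t': "t' \<in> hom C (Dom C t) (Dom C T)"
    using classifier by (simp_all add: partial_map_classifier_def slice_hom_iff slice_arr_iff hom_def)
  have "m \<in> hom C (Dom C t) (Cod C m)" using m by (simp add: mono_def hom_def)
  then have M: "(t, m, \<alpha>) \<in> Arr ?S" using t \<alpha> by (simp add: slice_arr_iff hom_def)
  have "Id C (Dom C t) \<in> hom C (Dom C t) (Dom C t)"
    using id_in_hom dom_cod_obj(1)[OF t] by blast
  then have "(t, Id C (Dom C t), t) \<in> hom ?S (Dom ?S (t, m, \<alpha>)) t"
    using t comp_id_right[of t] by (simp add: slice_hom_iff slice_arr_iff slice_simps hom_def)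
  moreover have "mono ?S (t, m, \<alpha>)" using mono_slice_iff[OF M] m by simp
  ultimately obtain \<chi> where "\<chi> \<in> hom ?S \<alpha> T"
    and pb: "is_pullback ?S (t, Id C (Dom C t), t) (t, m, \<alpha>) (t, t', T) \<chi>"
    using classifier unfolding partial_map_classifier_def by (metis slice_simps(3))
  then obtain \<alpha>' where \<chi>: "\<chi> = (\<alpha>, \<alpha>', T)" and "(\<alpha>, \<alpha>', T) \<in> Arr ?S"
    by (cases \<chi>) (simp add: slice_hom_iff)
  then have \<alpha>': "\<alpha>' \<in> hom C (Cod C m) (Dom C T)" and "cmp C T \<alpha>' = \<alpha>"
    using \<alpha> by (simp_all add: slice_arr_iff hom_def)
  moreover have pb_C: "is_pullback C (Id C (Dom C t)) m t' \<alpha>'"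
    using pb \<chi> by (auto intro: pullback_of_slice_pullback)
  moreover from pb_C have "cmp C \<alpha>' m = t'"
    using comp_id_right[OF t'] unfolding is_pullback_def by simp
  ultimately show ?thesis using \<alpha>' by blast
qed

theorem proposition3:
  fixes C :: "('o, 'm) cat"
  assumes "is_category C"
    and "\<forall>X\<in>Obj C. has_partial_map_classifiers (slice C X)"
  shows "strongly_amendable C"
  unfolding strongly_amendable_def
proof
  interpret category C by (rule category.intro) fact
  fix t assume t: "t \<in> Arr C"
  let ?S = "slice C (Cod C t)"
  have "t \<in> Obj ?S" using t by (simp add: slice_simps)
  then obtain T \<eta> where classifier: "partial_map_classifier ?S t T \<eta>"
    using assms(2) dom_cod_obj(2)[OF t] by (meson has_partial_map_classifiers_iff)
  then obtain t' where \<eta>: "\<eta> = (t, t', T)" and \<eta>_arr: "(t, t', T) \<in> Arr ?S"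
    by (cases \<eta>) (simp add: partial_map_classifier_def slice_hom_iff)
  then have "t' \<in> hom C (Dom C t) (Dom C T)" "T \<in> hom C (Dom C T) (Cod C t)"
    "cmp C T t' = t" "mono C t'"
    using classifier mono_slice_iff[OF \<eta>_arr]
    by (simp_all add: slice_arr_iff partial_map_classifier_def)
  then show "\<exists>t' \<beta>. mono C t' \<and> \<beta> \<in> Arr C \<and>
      Dom C t' = Dom C t \<and> Cod C t' = Dom C \<beta> \<and> Cod C \<beta> = Cod C t \<and> cmp C \<beta> t' = t \<and>
      (\<forall>m \<alpha>. mono C m \<longrightarrow> Dom C m = Dom C t \<longrightarrow> \<alpha> \<in> hom C (Cod C m) (Cod C t) \<longrightarrow>
        cmp C \<alpha> m = t \<longrightarrow> (\<exists>\<alpha>'. \<alpha>' \<in> hom C (Cod C m) (Cod C t') \<and> cmp C \<alpha>' m = t' \<and>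
          cmp C \<beta> \<alpha>' = \<alpha> \<and> is_pullback C (Id C (Dom C t)) m t' \<alpha>'))"
    using slice_classifier_amends[of t T t'] classifier \<eta>
    by (intro exI[of _ t'] exI[of _ T]) (auto simp: hom_def)
qed

end
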